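(* Let $n\ge1$, $k=1$, $m\ge1$, let $O\subseteq\mathbb{R}^n\times\mathbb{R}$ be open, let $U\subseteq\mathbb{R}^m$ be nonempty and closed, and let $\Omega=\{y\in\mathbb{R}:\exists x \text{ with } (x,y)\in O\}$. Let $A:\Omega\times U\to\mathbb{R}^{n\times n}$, $b:\Omega\times U\to\mathbb{R}^n$, $c_{1,j}:\Omega\to\mathbb{R}$ ($j=1,\dots,n$) and $f_1:\Omega\times U\to\mathbb{R}$ be locally Lipschitz, and consider the system $$\dot x(t)=A(y(t),u(t))x(t)+b(y(t),u(t)),\qquad \dot y(t)=f_1(y(t),u(t))+\sum_{j=1}^n c_{1,j}(y(t))x_j(t),$$ with $(x(t),y(t))\in O$, $u(t)\in U$. Assume that for every $(x_0,y_0)\in O$ and every $u\in L^\infty_{loc}(\mathbb{R}_+;U)$ there is a unique solution $t\mapsto (x(t,x_0,y_0;u),y(t,x_0,y_0;u))\in O$ on $[0,+\infty)$ satisfying the equations a.e. with initial value $(x_0,y_0)$. Let $r>0$, $(x_0,y_0)\in O$ and $u\in L^\infty([0,r];U)$, and suppose there exist $t,t_1,\dots,t_{n-1}\in[0,r]$ such that $$\det\begin{bmatrix} C'(t,x_0,y_0;u)\Phi(t,x_0,y_0;u)\\ C'(t_1,x_0,y_0;u)\Phi(t_1,x_0,y_0;u)\\ \vdots\\ C'(t_{n-1},x_0,y_0;u)\Phi(t_{n-1},x_0,y_0;u)\end{bmatrix}\neq0 .$$ Then the input $u$ strongly distinguishes the state $(x_0,y_0)$ in time $r$. Moreover, the symmetric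 matrix $Q(r,x_0,y_0;u)$ is positive definite and $x_0=Q^{-1}(r,x_0,y_0;u)\int_0^r q(t,x_0,y_0;u)p(t,x_0,y_0;u)\,dt$.
   Context: For $u\in L^\infty([0,r];U)$, solutions on $[0,r]$ are obtained from any extension of $u$ to $L^\infty_{loc}(\mathbb{R}_+;U)$. Definition: $u\in L^\infty([0,r];U)$ strongly distinguishes $(x_0,y_0)\in O$ in time $r>0$ if for every $(\xi,\eta)\in O$ with $(\xi,\eta)\neq(x_0,y_0)$, $\max_{t\in[0,r]}|y(t,x_0,y_0;u)-y(t,\xi,\eta;u)|>0$. Notation: $y(t)=y(t,x_0,y_0;u)$; $\Phi(t,x_0,y_0;u)$ solves $\frac{d}{dt}\Phi=A(y(t),u(t))\Phi$, $\Phi(0)=I$; $C'(t,x_0,y_0;u)=(c_{1,1}(y(t)),\dots,c_{1,n}(y(t)))\in\mathbb{R}^{1\times n}$ and $C=(C')'$; $\theta(t,x_0,y_0;u)=\int_0^t\Phi(t)\Phi^{-1}(\tau)b(y(\tau),u(\tau))d\tau$; $q(t,x_0,y_0;u)=\int_0^t\Phi'(s)C(s)ds\in\mathbb{R}^n$; $p(t,x_0,y_0;u)=y(t)-y_0-\int_0^t f_1(y(s),u(s))ds-\int_0^tC'(s)\theta(s)ds$; $Q(r,x_0,y_0;u)=\int_0^r q(t)q'(t)dt$. A prime denotes transpose. *)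

theory Defs
  imports "HOL-Analysis.Analysis"
begin

definition locally_lipschitz_on :: "'a::metric_space set \<Rightarrow> ('a \<Rightarrow> 'b::metric_space) \<Rightarrow> bool" where
  "locally_lipschitz_on S g \<longleftrightarrow> (\<forall>p\<in>S. \<exists>e>0. \<exists>L. L-lipschitz_on (cball p e \<inter> S) g)"

text \<open>Inputs in L-infinity-loc(R_+; U) (a representative: Lebesgue measurable,
  U-valued on [0,oo), bounded on every compact time interval).\<close>
definition admissible_input :: "'m::euclidean_space set \<Rightarrow> (real \<Rightarrow> 'm) \<Rightarrow> bool" where
  "admissible_input U u \<longleftrightarrow> u \<in> borel_measurable lebesgue \<and> (\<forall>t\<ge>0. u t \<in> U) \<and>
     (\<forall>T. bounded (u ` {0..T}))"

definition sys_rhs ::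
  "(real \<Rightarrow> 'm \<Rightarrow> real^'n^'n) \<Rightarrow> (real \<Rightarrow> 'm \<Rightarrow> real^'n) \<Rightarrow> (real \<Rightarrow> real^'n) \<Rightarrow>
   (real \<Rightarrow> 'm \<Rightarrow> real) \<Rightarrow> (real \<Rightarrow> 'm) \<Rightarrow> (real \<Rightarrow> (real^'n) \<times> real) \<Rightarrow> real \<Rightarrow> (real^'n) \<times> real" where
  "sys_rhs A b c f1 u z s =
     (A (snd (z s)) (u s) *v fst (z s) + b (snd (z s)) (u s),
      f1 (snd (z s)) (u s) + c (snd (z s)) \<bullet> fst (z s))"

text \<open>Solution on [0,oo) in the Caratheodory (integral) sense, staying in Ost.\<close>
definition is_solution ::
  "((real^'n) \<times> real) set \<Rightarrow> (real \<Rightarrow> 'm \<Rightarrow> real^'n^'n) \<Rightarrow> (real \<Rightarrow> 'm \<Rightarrow> real^'n) \<Rightarrow> (real \<Rightarrow> real^'n) \<Rightarrow>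
   (real \<Rightarrow> 'm \<Rightarrow> real) \<Rightarrow> (real \<Rightarrow> 'm) \<Rightarrow> real^'n \<Rightarrow> real \<Rightarrow> (real \<Rightarrow> (real^'n) \<times> real) \<Rightarrow> bool" where
  "is_solution Ost A b c f1 u x0 y0 z \<longleftrightarrow>
     z 0 = (x0, y0) \<and> (\<forall>t\<ge>0. z t \<in> Ost) \<and>
     (\<forall>t\<ge>0. (sys_rhs A b c f1 u z has_integral (z t - z 0)) {0..t})"

definition traj where
  "traj Ost A b c f1 u x0 y0 = (SOME z. is_solution Ost A b c f1 u x0 y0 z)"

definition ytraj where
  "ytraj Ost A b c f1 u x0 y0 t = snd (traj Ost A b c f1 u x0 y0 t)"

definition strongly_distinguishes where
  "strongly_distinguishes Ost A b c f1 u r x0 y0 \<longleftrightarrow>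
     (\<forall>\<xi> \<eta>. (\<xi>, \<eta>) \<in> Ost \<and> (\<xi>, \<eta>) \<noteq> (x0, y0) \<longrightarrow>
        (SUP t\<in>{0..r}. \<bar>ytraj Ost A b c f1 u x0 y0 t - ytraj Ost A b c f1 u \<xi> \<eta> t\<bar>) > 0)"

definition fundmat where
  "fundmat Ost A b c f1 u x0 y0 = (SOME \<Phi>. \<Phi> 0 = mat 1 \<and>
     (\<forall>t\<ge>0. ((\<lambda>s. A (ytraj Ost A b c f1 u x0 y0 s) (u s) ** \<Phi> s) has_integral (\<Phi> t - mat 1)) {0..t}))"

definition theta where
  "theta Ost A b c f1 u x0 y0 t = integral {0..t}
     (\<lambda>\<tau>. (fundmat Ost A b c f1 u x0 y0 t ** matrix_inv (fundmat Ost A b c f1 u x0 y0 \<tau>))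
            *v b (ytraj Ost A b c f1 u x0 y0 \<tau>) (u \<tau>))"

definition qfun where
  "qfun Ost A b c f1 u x0 y0 t = integral {0..t}
     (\<lambda>s. transpose (fundmat Ost A b c f1 u x0 y0 s) *v c (ytraj Ost A b c f1 u x0 y0 s))"

definition pfun where
  "pfun Ost A b c f1 u x0 y0 t =
     ytraj Ost A b c f1 u x0 y0 t - y0
     - integral {0..t} (\<lambda>s. f1 (ytraj Ost A b c f1 u x0 y0 s) (u s))
     - integral {0..t} (\<lambda>s. c (ytraj Ost A b c f1 u x0 y0 s) \<bullet> theta Ost A b c f1 u x0 y0 s)"

definition Qmat where
  "Qmat Ost A b c f1 u x0 y0 r = integral {0..r}
     (\<lambda>t. \<chi> i j. qfun Ost A b c f1 u x0 y0 t $ i * qfun Ost A b c f1 u x0 y0 t $ j)"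

end

theory Submission
  imports Defs
begin

(*
  Along the output y of (x0, y0) the x-equation is the linear time-varying system
  x' = A(y, u) x + b(y, u), so x(t) = \<Phi>(t) x0 + \<theta>(t) by variation of constants, and the
  y-equation turns p(t) = y(t) - y0 - \<integral> f1 - \<integral> C'\<theta> into the linear observation q(t) \<bullet> x0.
  A state (\<xi>, \<eta>) with the same output on [0, r] has \<eta> = y0 and drives the same linear system,
  so q(t) \<bullet> \<xi> = p(t) = q(t) \<bullet> x0 there. If q(t) \<bullet> v vanished on [0, r], so would its
  derivative C'(t) \<Phi>(t) v, in particular at t, t1, ..., t(n-1); the rank condition therefore
  makes the Gramian Q = \<integral> q q' positive definite, which gives \<xi> = x0 and x0 = Q\<inverse> \<integral> p q.
*)

section \<open>Product rule for indefinite integrals\<close>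

lemma sigma_finite_lebesgue_real: "sigma_finite_measure (lebesgue :: real measure)"
proof
  have "x \<in> (\<Union>n::nat. {-real n..real n})" for x :: real
  proof -
    obtain n :: nat where "\<bar>x\<bar> \<le> real n" using real_arch_simple by blast
    then show ?thesis by (auto intro!: exI[of _ n])
  qed
  then show "\<exists>A. countable A \<and> A \<subseteq> sets (lebesgue :: real measure) \<and> \<Union> A = space lebesgue \<and>
      (\<forall>a\<in>A. emeasure lebesgue a \<noteq> \<infinity>)"
    by (intro exI[of _ "range (\<lambda>n::nat. {-real n..real n})"]) (auto simp: emeasure_lborel_cbox_eq)
qed

interpretation lebesgue_pair: pair_sigma_finite "lebesgue :: real measure" "lebesgue :: real measure"
  by (simp add: pair_sigma_finite.intro sigma_finite_lebesgue_real)

lemma below_diagonal_in_sets_pair_lebesgue: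
  "{p::real \<times> real. snd p \<le> fst p} \<in> sets (lebesgue \<Otimes>\<^sub>M lebesgue)"
proof -
  have "fst \<in> borel_measurable (lebesgue \<Otimes>\<^sub>M (lebesgue::real measure))"
    by (rule measurable_compose[OF measurable_fst]) (simp add: measurable_completion)
  moreover have "snd \<in> borel_measurable (lebesgue \<Otimes>\<^sub>M (lebesgue::real measure))"
    by (rule measurable_compose[OF measurable_snd]) (simp add: measurable_completion)
  ultimately have "{p \<in> space (lebesgue \<Otimes>\<^sub>M (lebesgue::real measure)). snd p \<le> fst p} \<in> sets (lebesgue \<Otimes>\<^sub>M lebesgue)"
    by measurable
  then show ?thesis by (simp add: space_pair_measure)
qed

text \<open>Fubini on the plane, with the plane split along the diagonal.\<close>

lemma lebesgue_integral_mult_split_diagonal: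
  fixes F G :: "real \<Rightarrow> real"
  assumes F: "integrable lebesgue F" and G: "integrable lebesgue G"
  shows "(\<integral>x. F x \<partial>lebesgue) * (\<integral>y. G y \<partial>lebesgue) =
    (\<integral>x. F x * (\<integral>y. indicator {..x} y * G y \<partial>lebesgue) \<partial>lebesgue) +
    (\<integral>y. G y * (\<integral>x. indicator {..<y} x * F x \<partial>lebesgue) \<partial>lebesgue)"
proof -
  let ?P = "lebesgue \<Otimes>\<^sub>M (lebesgue :: real measure)"
  define \<phi> where "\<phi> p = F (fst p) * G (snd p)" for p
  define T where "T = {p::real \<times> real. snd p \<le> fst p}"
  have [measurable]: "F \<in> borel_measurable lebesgue" "G \<in> borel_measurable lebesgue"
    using F G by auto
  have m\<phi>: "\<phi> \<in> borel_measurable ?P" unfolding \<phi>_def by measurable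
  have i\<phi>: "integrable ?P \<phi>"
    by (rule lebesgue_pair.Fubini_integrable[OF m\<phi>]) (use F G in \<open>simp_all add: \<phi>_def abs_mult\<close>)
  have T: "T \<in> sets ?P" "- T \<in> sets ?P"
    using below_diagonal_in_sets_pair_lebesgue sets.compl_sets[of T ?P]
    by (auto simp: T_def space_pair_measure Compl_eq_Diff_UNIV)
  have iT: "integrable ?P (\<lambda>p. indicator T p * \<phi> p)" "integrable ?P (\<lambda>p. indicator (- T) p * \<phi> p)"
    using integrable_mult_indicator[OF T(1) i\<phi>] integrable_mult_indicator[OF T(2) i\<phi>] by simp_all
  have "(\<integral>x. F x \<partial>lebesgue) * (\<integral>y. G y \<partial>lebesgue) = integral\<^sup>L ?P \<phi>"
    using lebesgue_pair.integral_fst'[OF i\<phi>] by (simp add: \<phi>_def)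
  also have "\<dots> = integral\<^sup>L ?P (\<lambda>p. indicator T p * \<phi> p) + integral\<^sup>L ?P (\<lambda>p. indicator (- T) p * \<phi> p)"
    by (subst Bochner_Integration.integral_add[OF iT, symmetric])
      (auto intro!: Bochner_Integration.integral_cong simp: indicator_def)
  also have "integral\<^sup>L ?P (\<lambda>p. indicator T p * \<phi> p) =
      (\<integral>x. F x * (\<integral>y. indicator {..x} y * G y \<partial>lebesgue) \<partial>lebesgue)"
  proof -
    have "(\<lambda>y. indicator T (x, y) * \<phi> (x, y)) = (\<lambda>y. F x * (indicator {..x} y * G y))" for x
      by (auto simp: \<phi>_def T_def indicator_def)
    then show ?thesis using lebesgue_pair.integral_fst'[OF iT(1)] by simp
  qed
  also have "integral\<^sup>L ?P (\<lambda>p. indicator (- T) p * \<phi> p) =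
      (\<integral>y. G y * (\<integral>x. indicator {..<y} x * F x \<partial>lebesgue) \<partial>lebesgue)"
  proof -
    have "(\<lambda>x. indicator (- T) (x, y) * \<phi> (x, y)) = (\<lambda>x. G y * (indicator {..<y} x * F x))" for y
      by (auto simp: \<phi>_def T_def indicator_def not_le)
    moreover have "(\<lambda>(x, y). indicator (- T) (x, y) * \<phi> (x, y)) = (\<lambda>p. indicator (- T) p * \<phi> p)"
      by auto
    ultimately show ?thesis
      using lebesgue_pair.integral_snd[of "\<lambda>x y. indicator (- T) (x, y) * \<phi> (x, y)"] iT(2) by simp
  qed
  finally show ?thesis .
qed

lemma lebesgue_integral_indicator_upto:
  fixes g :: "real \<Rightarrow> real"
  assumes g: "g absolutely_integrable_on {a..t}" and s: "s \<in> {a..t}"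
  shows "(\<integral>\<tau>. indicator {..s} \<tau> * (indicator {a..t} \<tau> * g \<tau>) \<partial>lebesgue) = integral {a..s} g"
    and "(\<integral>\<tau>. indicator {..<s} \<tau> * (indicator {a..t} \<tau> * g \<tau>) \<partial>lebesgue) = integral {a..s} g"
proof -
  have "(\<lambda>\<tau>. indicator {..s} \<tau> * (indicator {a..t} \<tau> * g \<tau>)) = (\<lambda>\<tau>. indicator {a..s} \<tau> *\<^sub>R g \<tau>)"
    using s by (auto simp: indicator_def)
  moreover have "g absolutely_integrable_on {a..s}"
    by (rule set_integrable_subset[OF g]) (use s in auto)
  ultimately show "(\<integral>\<tau>. indicator {..s} \<tau> * (indicator {a..t} \<tau> * g \<tau>) \<partial>lebesgue) = integral {a..s} g"
    by (simp add: set_lebesgue_integral_eq_integral(2)[symmetric] set_lebesgue_integral_def)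
  have "(\<lambda>\<tau>. indicator {..<s} \<tau> * (indicator {a..t} \<tau> * g \<tau>)) = (\<lambda>\<tau>. indicator {a..<s} \<tau> *\<^sub>R g \<tau>)"
    using s by (auto simp: indicator_def)
  moreover have "g absolutely_integrable_on {a..<s}"
    by (rule set_integrable_subset[OF g]) (use s in auto)
  moreover have "integral {a..<s} g = integral {a..s} g"
    by (rule integral_spike_set) (auto intro: negligible_subset[of "{s}"])
  ultimately show "(\<integral>\<tau>. indicator {..<s} \<tau> * (indicator {a..t} \<tau> * g \<tau>) \<partial>lebesgue) = integral {a..s} g"
    by (simp add: set_lebesgue_integral_eq_integral(2)[symmetric] set_lebesgue_integral_def)
qed

lemma has_integral_mult_indefinite_integrals:
  fixes f g :: "real \<Rightarrow> real"
  assumes f: "f absolutely_integrable_on {a..t}" and g: "g absolutely_integrable_on {a..t}"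
  shows "((\<lambda>s. f s * integral {a..s} g + integral {a..s} f * g s) has_integral
           (integral {a..t} f * integral {a..t} g)) {a..t}"
proof -
  define F0 where "F0 = (\<lambda>s. indicator {a..t} s * f s)"
  define G0 where "G0 = (\<lambda>s. indicator {a..t} s * g s)"
  have F0: "integrable lebesgue F0" and G0: "integrable lebesgue G0"
    using f g by (simp_all add: F0_def G0_def set_integrable_def)
  have inner_F: "(\<integral>x. indicator {..<y} x * F0 x \<partial>lebesgue) = integral {a..y} f" if "y \<in> {a..t}" for y
    using lebesgue_integral_indicator_upto(2)[OF f that] by (simp add: F0_def)
  have inner_G: "(\<integral>y. indicator {..x} y * G0 y \<partial>lebesgue) = integral {a..x} g" if "x \<in> {a..t}" for x
    using lebesgue_integral_indicator_upto(1)[OF g that] by (simp add: G0_def)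
  have cont: "continuous_on {a..t} (\<lambda>s. integral {a..s} h)" if "h absolutely_integrable_on {a..t}"
    for h :: "real \<Rightarrow> real"
    by (rule indefinite_integral_continuous_1) (use that in \<open>simp add: absolutely_integrable_on_def\<close>)
  have bounded_product: "(\<lambda>s. integral {a..s} h * k s) absolutely_integrable_on {a..t}"
    if h: "h absolutely_integrable_on {a..t}" and k: "k absolutely_integrable_on {a..t}"
    for h k :: "real \<Rightarrow> real"
    by (rule absolutely_integrable_bounded_measurable_product_real[OF _ _ _ k])
      (auto intro: continuous_imp_measurable_on_sets_lebesgue[OF cont[OF h]] compact_imp_bounded
        compact_continuous_image[OF cont[OF h]])
  have "((\<lambda>s. integral {a..s} g * f s) has_integral (\<integral>x. F0 x * integral {a..x} g \<partial>lebesgue)) {a..t}"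
    using has_integral_set_lebesgue[OF bounded_product[OF g f]]
    by (simp add: set_lebesgue_integral_def F0_def mult_ac)
  moreover have "((\<lambda>s. integral {a..s} f * g s) has_integral (\<integral>y. G0 y * integral {a..y} f \<partial>lebesgue)) {a..t}"
    using has_integral_set_lebesgue[OF bounded_product[OF f g]]
    by (simp add: set_lebesgue_integral_def G0_def mult_ac)
  moreover have "(\<integral>x. F0 x * integral {a..x} g \<partial>lebesgue) + (\<integral>y. G0 y * integral {a..y} f \<partial>lebesgue) =
      integral {a..t} f * integral {a..t} g"
  proof -
    have "(\<integral>x. F0 x * integral {a..x} g \<partial>lebesgue) = (\<integral>x. F0 x * (\<integral>y. indicator {..x} y * G0 y \<partial>lebesgue) \<partial>lebesgue)"
      by (rule Bochner_Integration.integral_cong) (auto simp: inner_G F0_def split: split_indicator)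
    moreover have "(\<integral>y. G0 y * integral {a..y} f \<partial>lebesgue) = (\<integral>y. G0 y * (\<integral>x. indicator {..<y} x * F0 x \<partial>lebesgue) \<partial>lebesgue)"
      by (rule Bochner_Integration.integral_cong) (auto simp: inner_F G0_def split: split_indicator)
    moreover have "(\<integral>x. F0 x \<partial>lebesgue) = integral {a..t} f" "(\<integral>x. G0 x \<partial>lebesgue) = integral {a..t} g"
      using set_lebesgue_integral_eq_integral(2)[OF f] set_lebesgue_integral_eq_integral(2)[OF g]
      by (simp_all add: F0_def G0_def set_lebesgue_integral_def)
    ultimately show ?thesis using lebesgue_integral_mult_split_diagonal[OF F0 G0] by simp
  qed
  ultimately show ?thesis by (auto dest: has_integral_add simp: mult_ac)
qed

lemma bilinear_eq_sum_Basis: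
  fixes h :: "'a::euclidean_space \<Rightarrow> 'b::euclidean_space \<Rightarrow> 'c::euclidean_space"
  assumes "bilinear h"
  shows "h x y = (\<Sum>(i,j)\<in>Basis \<times> Basis. ((x \<bullet> i) * (y \<bullet> j)) *\<^sub>R h i j)"
proof -
  have "h x y = h (\<Sum>i\<in>Basis. (x \<bullet> i) *\<^sub>R i) (\<Sum>j\<in>Basis. (y \<bullet> j) *\<^sub>R j)"
    by (simp add: euclidean_representation)
  also have "\<dots> = (\<Sum>(i,j)\<in>Basis \<times> Basis. h ((x \<bullet> i) *\<^sub>R i) ((y \<bullet> j) *\<^sub>R j))"
    by (rule bilinear_sum[OF assms])
  also have "\<dots> = (\<Sum>(i,j)\<in>Basis \<times> Basis. ((x \<bullet> i) * (y \<bullet> j)) *\<^sub>R h i j)"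
    by (rule sum.cong) (auto simp: bilinear_lmul[OF assms] bilinear_rmul[OF assms])
  finally show ?thesis .
qed

lemma bilinear_matrix_matrix_mult: "bilinear (\<lambda>(x::real^'n^'m) (y::real^'k^'n). x ** y)"
  unfolding bilinear_def
  by (auto intro!: linearI simp: vec_eq_iff matrix_matrix_mult_def sum.distrib algebra_simps sum_distrib_left)

lemma bilinear_matrix_vector_mult: "bilinear (\<lambda>(x::real^'n^'m) (y::real^'n). x *v y)"
  unfolding bilinear_def
  by (auto intro!: linearI simp: vec_eq_iff matrix_vector_mult_def sum.distrib algebra_simps sum_distrib_left)

lemma bilinear_vector_matrix_mult: "bilinear (\<lambda>(x::real^'m) (y::real^'n^'m). x v* y)"
  unfolding bilinear_def
  by (auto intro!: linearI simp: vec_eq_iff vector_matrix_mult_def sum.distrib algebra_simps sum_distrib_left)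

lemma bilinear_swap: "bilinear h \<Longrightarrow> bilinear (\<lambda>x y. h y x)"
  by (simp add: bilinear_def)

lemma bounded_linear_transpose: "bounded_linear (transpose :: real^'n^'m \<Rightarrow> real^'m^'n)"
proof -
  have "linear (transpose :: real^'n^'m \<Rightarrow> real^'m^'n)"
    by (rule linearI) (simp_all add: transpose_def vec_eq_iff)
  then show ?thesis by (simp add: linear_conv_bounded_linear)
qed

lemma bounded_linear_bilinear_left:
  fixes h :: "'a::euclidean_space \<Rightarrow> 'b::euclidean_space \<Rightarrow> 'c::euclidean_space"
  assumes "bilinear h"
  shows "bounded_linear (\<lambda>x. h x y)"
  using assms unfolding bilinear_conv_bounded_bilinear by (rule bounded_bilinear.bounded_linear_left)

lemma bounded_linear_bilinear_right:
  fixes h :: "'a::euclidean_space \<Rightarrow> 'b::euclidean_space \<Rightarrow> 'c::euclidean_space"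
  assumes "bilinear h"
  shows "bounded_linear (\<lambda>y. h x y)"
  using assms unfolding bilinear_conv_bounded_bilinear by (rule bounded_bilinear.bounded_linear_right)

lemma has_integral_bilinear_indefinite_integrals:
  fixes h :: "'a::euclidean_space \<Rightarrow> 'b::euclidean_space \<Rightarrow> 'c::euclidean_space"
    and f :: "real \<Rightarrow> 'a" and g :: "real \<Rightarrow> 'b"
  assumes h: "bilinear h"
    and f: "f absolutely_integrable_on {a..t}" and g: "g absolutely_integrable_on {a..t}"
  shows "((\<lambda>s. h (f s) (integral {a..s} g) + h (integral {a..s} f) (g s)) has_integral
           h (integral {a..t} f) (integral {a..t} g)) {a..t}"
proof -
  have component: "integral {a..s} (\<lambda>x. k x \<bullet> i) = integral {a..s} k \<bullet> i"
    if "k absolutely_integrable_on {a..t}" "s \<in> {a..t}" for k :: "real \<Rightarrow> 'd::euclidean_space" and s i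
  proof -
    have "k integrable_on {a..s}"
      using that by (auto simp: absolutely_integrable_on_def intro: integrable_on_subinterval)
    then show ?thesis by simp
  qed
  have ij: "((\<lambda>s. ((f s \<bullet> i) * (integral {a..s} g \<bullet> j) + (integral {a..s} f \<bullet> i) * (g s \<bullet> j)) *\<^sub>R h i j)
      has_integral (((integral {a..t} f \<bullet> i) * (integral {a..t} g \<bullet> j)) *\<^sub>R h i j)) {a..t}" for i j
  proof -
    have "((\<lambda>s. (f s \<bullet> i) * integral {a..s} (\<lambda>x. g x \<bullet> j) + integral {a..s} (\<lambda>x. f x \<bullet> i) * (g s \<bullet> j))
       has_integral (integral {a..t} (\<lambda>x. f x \<bullet> i) * integral {a..t} (\<lambda>x. g x \<bullet> j))) {a..t}"
      by (rule has_integral_mult_indefinite_integrals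
          [OF absolutely_integrable_component[OF f] absolutely_integrable_component[OF g]])
    then have "((\<lambda>s. (f s \<bullet> i) * (integral {a..s} g \<bullet> j) + (integral {a..s} f \<bullet> i) * (g s \<bullet> j))
       has_integral ((integral {a..t} f \<bullet> i) * (integral {a..t} g \<bullet> j))) {a..t}"
      by (rule has_integral_eq_rhs[OF has_integral_eq[rotated]])
        (use f g in \<open>auto simp: component[OF f] component[OF g] absolutely_integrable_on_def\<close>)
    then show ?thesis by (rule has_integral_scaleR_left)
  qed
  have "((\<lambda>s. \<Sum>(i,j)\<in>Basis \<times> Basis. ((f s \<bullet> i) * (integral {a..s} g \<bullet> j) + (integral {a..s} f \<bullet> i) * (g s \<bullet> j)) *\<^sub>R h i j)
      has_integral (\<Sum>(i,j)\<in>Basis \<times> Basis. ((integral {a..t} f \<bullet> i) * (integral {a..t} g \<bullet> j)) *\<^sub>R h i j)) {a..t}"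
    by (rule has_integral_sum) (auto intro: ij)
  then show ?thesis
    by (simp add: bilinear_eq_sum_Basis[OF h, of "f _"] bilinear_eq_sum_Basis[OF h, of "integral _ f"]
         bilinear_eq_sum_Basis[OF h, of "integral {a..t} f"] sum.distrib[symmetric] scaleR_add_left case_prod_unfold)
qed

section \<open>Linear Volterra integral equations\<close>

definition locally_bounded_measurable :: "(real \<Rightarrow> 'a::euclidean_space) \<Rightarrow> bool" where
  "locally_bounded_measurable N \<longleftrightarrow>
     (\<forall>T. N \<in> borel_measurable (lebesgue_on {0..T}) \<and> bounded (N ` {0..T}))"

lemma absolutely_integrable_bilinear_measurable_continuous:
  fixes h :: "'a::euclidean_space \<Rightarrow> 'b::euclidean_space \<Rightarrow> 'c::euclidean_space"
    and N :: "real \<Rightarrow> 'a" and P :: "real \<Rightarrow> 'b"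
  assumes h: "bilinear h" and N: "N \<in> borel_measurable (lebesgue_on {0..T})" "bounded (N ` {0..T})"
    and P: "continuous_on {0..T} P" and t: "t \<le> T"
  shows "(\<lambda>s. h (N s) (P s)) absolutely_integrable_on {0..t}"
proof -
  have "(\<lambda>s. h (N s) (P s)) absolutely_integrable_on {0..T}"
    by (rule absolutely_integrable_bounded_measurable_product[OF h N(1) _ N(2)
          absolutely_integrable_continuous_real[OF P]]) simp
  then show ?thesis by (rule set_integrable_subset) (use t in auto)
qed

lemma integrable_bilinear_measurable_continuous:
  fixes h :: "'a::euclidean_space \<Rightarrow> 'b::euclidean_space \<Rightarrow> 'c::euclidean_space"
    and N :: "real \<Rightarrow> 'a" and P :: "real \<Rightarrow> 'b"
  assumes "bilinear h" "N \<in> borel_measurable (lebesgue_on {0..T})" "bounded (N ` {0..T})"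
    and "continuous_on {0..T} P" "t \<le> T"
  shows "(\<lambda>s. h (N s) (P s)) integrable_on {0..t}"
  using absolutely_integrable_bilinear_measurable_continuous[OF assms]
  by (simp add: absolutely_integrable_on_def)

lemma has_integral_power_div_fact:
  fixes c L :: real
  assumes t: "0 \<le> t"
  shows "((\<lambda>s. c * L * (L * s) ^ k / fact k) has_integral (c * (L * t) ^ Suc k / fact (Suc k))) {0..t}"
proof -
  have "((\<lambda>s. c * (L * s) ^ Suc k / fact (Suc k)) has_vector_derivative c * L * (L * x) ^ k / fact k)
      (at x within {0..t})" for x
  proof -
    have fun_eq: "(\<lambda>s. c * (L * s) ^ Suc k / fact (Suc k)) = (\<lambda>s. (c * L ^ Suc k / fact (Suc k)) * s ^ Suc k)"
      by (simp add: power_mult_distrib mult_ac)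
    have deriv_eq: "(c * L ^ Suc k / fact (Suc k)) * (real (Suc k) * x ^ (Suc k - Suc 0)) = c * L * (L * x) ^ k / fact k"
      by (simp add: fact_Suc power_mult_distrib field_simps del: of_nat_Suc)
    have "((\<lambda>s. (c * L ^ Suc k / fact (Suc k)) * s ^ Suc k) has_real_derivative
        (c * L ^ Suc k / fact (Suc k)) * (real (Suc k) * x ^ (Suc k - Suc 0))) (at x)"
      by (rule DERIV_cmult[OF DERIV_pow])
    then have "((\<lambda>s. c * (L * s) ^ Suc k / fact (Suc k)) has_real_derivative c * L * (L * x) ^ k / fact k) (at x)"
      by (simp only: fun_eq deriv_eq)
    then show ?thesis
      by (simp add: has_real_derivative_iff_has_vector_derivative[symmetric] has_field_derivative_at_within)
  qed
  then show ?thesis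
    using fundamental_theorem_of_calculus[OF t, of "\<lambda>s. c * (L * s) ^ Suc k / fact (Suc k)"] by simp
qed

lemma norm_integral_bilinear_power_bound:
  fixes h :: "'a::euclidean_space \<Rightarrow> 'b::euclidean_space \<Rightarrow> 'b"
    and N :: "real \<Rightarrow> 'a" and E :: "real \<Rightarrow> 'b"
  assumes B: "\<And>x y. norm (h x y) \<le> B * norm x * norm y" "0 \<le> B"
    and K: "\<And>s. s \<in> {0..t} \<Longrightarrow> norm (N s) \<le> K"
    and int: "(\<lambda>s. h (N s) (E s)) integrable_on {0..t}"
    and E: "\<And>s. s \<in> {0..t} \<Longrightarrow> norm (E s) \<le> c * (B * K * s) ^ k / fact k"
    and t: "0 \<le> t"
  shows "norm (integral {0..t} (\<lambda>s. h (N s) (E s))) \<le> c * (B * K * t) ^ Suc k / fact (Suc k)"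
proof -
  have hi: "((\<lambda>s. c * (B*K) * ((B*K) * s) ^ k / fact k) has_integral (c * (B * K * t) ^ Suc k / fact (Suc k))) {0..t}"
    by (rule has_integral_power_div_fact[OF t])
  have "norm (integral {0..t} (\<lambda>s. h (N s) (E s))) \<le> integral {0..t} (\<lambda>s. c * (B*K) * ((B*K) * s) ^ k / fact k)"
  proof (rule integral_norm_bound_integral[OF int])
    show "(\<lambda>s. c * (B*K) * ((B*K) * s) ^ k / fact k) integrable_on {0..t}" using hi by blast
    fix s assume s: "s \<in> {0..t}"
    have "0 \<le> c * (B * K * s) ^ k / fact k" using E[OF s] norm_ge_zero order_trans by blast
    moreover have "B * norm (N s) \<le> B * K" using K[OF s] B(2) by (simp add: mult_left_mono)
    ultimately have "B * norm (N s) * norm (E s) \<le> B * K * (c * (B * K * s) ^ k / fact k)"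
      using E[OF s] B(2) by (metis mult_mono norm_ge_zero mult_nonneg_nonneg order_trans)
    moreover have "B * K * (c * (B * K * s) ^ k / fact k) = c * (B*K) * ((B*K) * s) ^ k / fact k"
      by (simp add: mult_ac)
    ultimately show "norm (h (N s) (E s)) \<le> c * (B*K) * ((B*K) * s) ^ k / fact k"
      using B(1)[of "N s" "E s"] by linarith
  qed
  then show ?thesis using integral_unique[OF hi] by simp
qed

text \<open>Gronwall's argument: iterating the equation bounds D by every term of an
  exponential series.\<close>

lemma linear_volterra_homogeneous_eq_0:
  fixes h :: "'a::euclidean_space \<Rightarrow> 'b::euclidean_space \<Rightarrow> 'b"
    and N :: "real \<Rightarrow> 'a" and D :: "real \<Rightarrow> 'b"
  assumes h: "bilinear h"
    and N: "N \<in> borel_measurable (lebesgue_on {0..T})" "bounded (N ` {0..T})"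
    and D: "continuous_on {0..T} D"
    and eq: "\<And>t. t \<in> {0..T} \<Longrightarrow> D t = integral {0..t} (\<lambda>s. h (N s) (D s))"
    and t: "t \<in> {0..T}"
  shows "D t = 0"
proof -
  obtain B where B0: "B > 0" and B: "\<And>x y. norm (h x y) \<le> B * norm x * norm y"
    using bilinear_bounded_pos[OF h] by blast
  obtain K where K: "\<And>s. s \<in> {0..T} \<Longrightarrow> norm (N s) \<le> K"
    using N(2) by (force simp: bounded_iff)
  obtain C where C: "\<And>s. s \<in> {0..T} \<Longrightarrow> norm (D s) \<le> C"
    using compact_imp_bounded[OF compact_continuous_image[OF D compact_Icc]] by (force simp: bounded_iff)
  have bound: "\<forall>s\<in>{0..T}. norm (D s) \<le> C * (B * K * s) ^ k / fact k" for k
  proof (induction k)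
    case 0 then show ?case using C by simp
  next
    case (Suc k)
    show ?case
    proof
      fix s assume s: "s \<in> {0..T}"
      have "norm (D s) = norm (integral {0..s} (\<lambda>u. h (N u) (D u)))" using eq[OF s] by simp
      also have "\<dots> \<le> C * (B * K * s) ^ Suc k / fact (Suc k)"
        by (rule norm_integral_bilinear_power_bound[OF B less_imp_le[OF B0]])
          (use K s Suc integrable_bilinear_measurable_continuous[OF h N D] in auto)
      finally show "norm (D s) \<le> C * (B * K * s) ^ Suc k / fact (Suc k)" .
    qed
  qed
  have "(\<lambda>k. C * (inverse (fact k) * (B * K * t) ^ k)) \<longlonglongrightarrow> C * 0"
    by (intro tendsto_intros summable_LIMSEQ_zero[OF summable_exp])
  then have "(\<lambda>k. C * (B * K * t) ^ k / fact k) \<longlonglongrightarrow> 0"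
    by (simp add: field_simps)
  then have "norm (D t) \<le> 0"
    using bound t by (intro LIMSEQ_le_const) auto
  then show ?thesis by simp
qed

primrec picard_iterate :: "('a \<Rightarrow> 'b \<Rightarrow> 'b::euclidean_space) \<Rightarrow> (real \<Rightarrow> 'a) \<Rightarrow> 'b \<Rightarrow> nat \<Rightarrow> real \<Rightarrow> 'b"
  where
    "picard_iterate h N x0 0 = (\<lambda>t. x0)"
  | "picard_iterate h N x0 (Suc k) = (\<lambda>t. x0 + integral {0..t} (\<lambda>s. h (N s) (picard_iterate h N x0 k s)))"

lemma continuous_on_picard_iterate:
  fixes h :: "'a::euclidean_space \<Rightarrow> 'b::euclidean_space \<Rightarrow> 'b"
  assumes h: "bilinear h" and N: "N \<in> borel_measurable (lebesgue_on {0..T})" "bounded (N ` {0..T})"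
  shows "continuous_on {0..T} (picard_iterate h N x0 k)"
proof (induction k)
  case (Suc k)
  have "continuous_on {0..T} (\<lambda>t. integral {0..t} (\<lambda>s. h (N s) (picard_iterate h N x0 k s)))"
    by (rule indefinite_integral_continuous_1
        [OF integrable_bilinear_measurable_continuous[OF h N Suc.IH order_refl]])
  then show ?case by (auto intro: continuous_intros)
qed simp

lemma norm_picard_iterate_diff_le:
  fixes h :: "'a::euclidean_space \<Rightarrow> 'b::euclidean_space \<Rightarrow> 'b"
  assumes h: "bilinear h" and B: "\<And>x y. norm (h x y) \<le> B * norm x * norm y" "0 \<le> B"
    and N: "N \<in> borel_measurable (lebesgue_on {0..T})" "bounded (N ` {0..T})"
    and K: "\<And>s. s \<in> {0..T} \<Longrightarrow> norm (N s) \<le> K"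
  shows "\<forall>t\<in>{0..T}. norm (picard_iterate h N x0 (Suc k) t - picard_iterate h N x0 k t)
           \<le> norm x0 * (B * K * t) ^ Suc k / fact (Suc k)"
proof (induction k)
  let ?P = "picard_iterate h N x0"
  have integrable: "(\<lambda>s. h (N s) (P s)) integrable_on {0..t}"
    if "continuous_on {0..T} P" "t \<in> {0..T}" for P t
    using integrable_bilinear_measurable_continuous[OF h N that(1)] that(2) by simp
  have cont: "continuous_on {0..T} (?P k)" for k
    by (rule continuous_on_picard_iterate[OF h N])
  {
    case 0
    show ?case
    proof
      fix t assume t: "t \<in> {0..T}"
      have "?P (Suc 0) t - ?P 0 t = integral {0..t} (\<lambda>s. h (N s) x0)" by simp
      also have "norm \<dots> \<le> norm x0 * (B * K * t) ^ Suc 0 / fact (Suc 0)"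
        by (rule norm_integral_bilinear_power_bound[OF B, where k=0])
          (use t K integrable[OF continuous_on_const] in auto)
      finally show "norm (?P (Suc 0) t - ?P 0 t) \<le> norm x0 * (B * K * t) ^ Suc 0 / fact (Suc 0)" .
    qed
  next
    case (Suc k)
    show ?case
    proof
      fix t assume t: "t \<in> {0..T}"
      have "?P (Suc (Suc k)) t - ?P (Suc k) t =
          integral {0..t} (\<lambda>s. h (N s) (?P (Suc k) s)) - integral {0..t} (\<lambda>s. h (N s) (?P k s))"
        by simp
      also have "\<dots> = integral {0..t} (\<lambda>s. h (N s) (?P (Suc k) s - ?P k s))"
        by (simp only: integral_diff[symmetric, OF integrable[OF cont t] integrable[OF cont t]]
            bilinear_rsub[OF h])
      also have "norm \<dots> \<le> norm x0 * (B * K * t) ^ Suc (Suc k) / fact (Suc (Suc k))"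
      proof (rule norm_integral_bilinear_power_bound[OF B])
        show "(\<lambda>s. h (N s) (?P (Suc k) s - ?P k s)) integrable_on {0..t}"
          by (rule integrable[OF continuous_on_diff[OF cont cont] t])
      qed (use t K Suc in \<open>auto simp del: picard_iterate.simps\<close>)
      finally show "norm (?P (Suc (Suc k)) t - ?P (Suc k) t) \<le> norm x0 * (B * K * t) ^ Suc (Suc k) / fact (Suc (Suc k))" .
    qed
  }
qed

lemma picard_iterate_uniform_limit:
  fixes h :: "'a::euclidean_space \<Rightarrow> 'b::euclidean_space \<Rightarrow> 'b"
  assumes h: "bilinear h" and N: "N \<in> borel_measurable (lebesgue_on {0..T})" "bounded (N ` {0..T})"
  shows "uniform_limit {0..T} (picard_iterate h N x0)
    (\<lambda>t. x0 + (\<Sum>k. picard_iterate h N x0 (Suc k) t - picard_iterate h N x0 k t)) sequentially"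
proof -
  let ?P = "picard_iterate h N x0"
  define d where "d k t = ?P (Suc k) t - ?P k t" for k t
  obtain B where B0: "B > 0" and B: "\<And>x y. norm (h x y) \<le> B * norm x * norm y"
    using bilinear_bounded_pos[OF h] by blast
  obtain K where K0: "K > 0" and K: "\<And>s. s \<in> {0..T} \<Longrightarrow> norm (N s) \<le> K"
    using N(2) by (auto simp: bounded_pos)
  define M where "M k = norm x0 * (B * K * T) ^ Suc k / fact (Suc k)" for k
  have "norm (d k t) \<le> M k" if t: "t \<in> {0..T}" for k t
  proof -
    have "(B * K * t) ^ Suc k \<le> (B * K * T) ^ Suc k"
      using t B0 K0 by (intro power_mono) (auto intro: mult_left_mono)
    then have "norm x0 * (B * K * t) ^ Suc k / fact (Suc k) \<le> M k"
      unfolding M_def by (intro divide_right_mono mult_left_mono) auto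
    moreover have "norm (d k t) \<le> norm x0 * (B * K * t) ^ Suc k / fact (Suc k)"
      using norm_picard_iterate_diff_le[OF h B less_imp_le[OF B0] N K, of x0 k] t
      unfolding d_def by blast
    ultimately show ?thesis by linarith
  qed
  moreover have "summable M"
  proof -
    have "summable (\<lambda>k. norm x0 * (inverse (fact k) * (B * K * T) ^ k))"
      by (intro summable_mult summable_exp)
    then have "summable (\<lambda>k. norm x0 * (inverse (fact (Suc k)) * (B * K * T) ^ Suc k))"
      by (subst summable_Suc_iff)
    moreover have "M = (\<lambda>k. norm x0 * (inverse (fact (Suc k)) * (B * K * T) ^ Suc k))"
      by (simp add: M_def divide_inverse mult_ac fun_eq_iff)
    ultimately show ?thesis by simp
  qed
  ultimately have "uniform_limit {0..T} (\<lambda>n t. \<Sum>k<n. d k t) (\<lambda>t. \<Sum>k. d k t) sequentially"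
    by (rule Weierstrass_m_test)
  then have "uniform_limit {0..T} (\<lambda>n t. x0 + (\<Sum>k<n. d k t)) (\<lambda>t. x0 + (\<Sum>k. d k t)) sequentially"
    by (intro uniform_limit_intros)
  moreover have "?P n t = x0 + (\<Sum>k<n. d k t)" for n t
    using sum_lessThan_telescope[of "\<lambda>k. ?P k t" n] by (simp add: d_def del: picard_iterate.simps(2))
  then have "?P = (\<lambda>n t. x0 + (\<Sum>k<n. d k t))"
    by (simp add: fun_eq_iff del: picard_iterate.simps(2))
  ultimately show ?thesis unfolding d_def[symmetric] by simp
qed

lemma integral_bilinear_tendsto_uniform_limit:
  fixes h :: "'a::euclidean_space \<Rightarrow> 'b::euclidean_space \<Rightarrow> 'c::euclidean_space"
    and N :: "real \<Rightarrow> 'a" and P :: "nat \<Rightarrow> real \<Rightarrow> 'b" and Q :: "real \<Rightarrow> 'b"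
  assumes h: "bilinear h" and N: "N \<in> borel_measurable (lebesgue_on {0..t})" "bounded (N ` {0..t})"
    and P: "\<And>n. continuous_on {0..t} (P n)" and Q: "continuous_on {0..t} Q"
    and lim: "uniform_limit {0..t} P Q sequentially" and t: "0 \<le> t"
  shows "(\<lambda>n. integral {0..t} (\<lambda>s. h (N s) (P n s))) \<longlonglongrightarrow> integral {0..t} (\<lambda>s. h (N s) (Q s))"
proof (rule LIMSEQ_I)
  fix e :: real assume e: "e > 0"
  obtain B where B0: "B > 0" and B: "\<And>x y. norm (h x y) \<le> B * norm x * norm y"
    using bilinear_bounded_pos[OF h] by blast
  obtain K where K0: "K > 0" and K: "\<And>s. s \<in> {0..t} \<Longrightarrow> norm (N s) \<le> K"
    using N(2) by (auto simp: bounded_pos)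
  define X where "X = B * K * (t + 1)"
  have X0: "X > 0" unfolding X_def using B0 K0 t by auto
  define e' where "e' = e / (2 * X)"
  have e'0: "e' > 0" unfolding e'_def using e X0 by auto
  obtain n0 where n0: "\<And>n s. n \<ge> n0 \<Longrightarrow> s \<in> {0..t} \<Longrightarrow> dist (P n s) (Q s) < e'"
    using uniform_limitD[OF lim e'0] unfolding eventually_sequentially by blast
  have "norm (integral {0..t} (\<lambda>s. h (N s) (P n s)) - integral {0..t} (\<lambda>s. h (N s) (Q s))) < e"
    if n: "n \<ge> n0" for n
  proof -
    have "integral {0..t} (\<lambda>s. h (N s) (P n s)) - integral {0..t} (\<lambda>s. h (N s) (Q s))
        = integral {0..t} (\<lambda>s. h (N s) (P n s - Q s))"
      by (simp only: bilinear_rsub[OF h] integral_diff[symmetric,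
            OF integrable_bilinear_measurable_continuous[OF h N P order_refl]
               integrable_bilinear_measurable_continuous[OF h N Q order_refl]])
    also have "norm \<dots> \<le> integral {0..t} (\<lambda>s. B * K * e')"
    proof (rule integral_norm_bound_integral)
      fix s assume s: "s \<in> {0..t}"
      have "norm (P n s - Q s) \<le> e'" using n0[OF n s] by (simp add: dist_norm)
      then have "B * norm (N s) * norm (P n s - Q s) \<le> B * K * e'"
        using K[OF s] B0 K0 by (intro mult_mono) (auto intro: mult_left_mono)
      then show "norm (h (N s) (P n s - Q s)) \<le> B * K * e'" using B order_trans by blast
    qed (auto intro!: integrable_bilinear_measurable_continuous[OF h N] continuous_intros P Q)
    also have "\<dots> = B * K * e' * t" using t by simp
    also have "\<dots> < e"
    proof -
      have "B * K * e' * (t + 1) = X * (e / (2 * X))" unfolding e'_def X_def by (simp add: mult_ac)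
      then have "B * K * e' * (t + 1) = e / 2" using X0 by simp
      moreover have "B * K * e' * t \<le> B * K * e' * (t + 1)"
        using B0 K0 e'0 by (intro mult_left_mono) auto
      ultimately show ?thesis using e by linarith
    qed
    finally show ?thesis .
  qed
  then show "\<exists>n0. \<forall>n\<ge>n0. norm (integral {0..t} (\<lambda>s. h (N s) (P n s)) - integral {0..t} (\<lambda>s. h (N s) (Q s))) < e"
    by blast
qed

lemma linear_volterra_exists:
  fixes h :: "'a::euclidean_space \<Rightarrow> 'b::euclidean_space \<Rightarrow> 'b" and N :: "real \<Rightarrow> 'a"
  assumes h: "bilinear h" and N: "locally_bounded_measurable N"
  obtains P where "\<And>T. continuous_on {0..T} P"
    and "\<And>t. 0 \<le> t \<Longrightarrow> P t = x0 + integral {0..t} (\<lambda>s. h (N s) (P s))"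
proof -
  let ?P = "picard_iterate h N x0"
  define Q where "Q t = x0 + (\<Sum>k. ?P (Suc k) t - ?P k t)" for t
  have NT: "N \<in> borel_measurable (lebesgue_on {0..T})" "bounded (N ` {0..T})" for T
    using N by (auto simp: locally_bounded_measurable_def)
  have lim: "uniform_limit {0..T} ?P Q sequentially" for T
    unfolding Q_def[abs_def] by (rule picard_iterate_uniform_limit[OF h NT])
  have Q_cont: "continuous_on {0..T} Q" for T
    using continuous_on_picard_iterate[OF h NT] by (intro uniform_limit_theorem[OF always_eventually lim]) auto
  have "Q t = x0 + integral {0..t} (\<lambda>s. h (N s) (Q s))" if t: "0 \<le> t" for t
  proof -
    have "(\<lambda>n. ?P (Suc n) t) \<longlonglongrightarrow> Q t"
      using LIMSEQ_Suc[OF tendsto_uniform_limitI[OF lim[of t]]] t by simp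
    moreover have "(\<lambda>n. ?P (Suc n) t) \<longlonglongrightarrow> x0 + integral {0..t} (\<lambda>s. h (N s) (Q s))"
      using integral_bilinear_tendsto_uniform_limit
        [OF h NT continuous_on_picard_iterate[OF h NT] Q_cont lim t]
      by (auto intro: tendsto_intros)
    ultimately show ?thesis by (rule LIMSEQ_unique)
  qed
  with Q_cont that show ?thesis by blast
qed

section \<open>Fundamental matrices and variation of constants\<close>

lemma continuous_on_if_has_integral_increment:
  fixes z g :: "real \<Rightarrow> 'a::banach"
  assumes "\<And>t. t \<in> {0..T} \<Longrightarrow> (g has_integral (z t - z 0)) {0..t}"
  shows "continuous_on {0..T} z"
proof (cases "0 \<le> T")
  case True
  have "continuous_on {0..T} (\<lambda>t. z 0 + integral {0..t} g)"
    using has_integral_integrable[OF assms[of T]] True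
    by (intro continuous_intros indefinite_integral_continuous_1) auto
  moreover have "z 0 + integral {0..t} g = z t" if "t \<in> {0..T}" for t
    using integral_unique[OF assms[OF that]] by simp
  ultimately show ?thesis by (rule continuous_on_eq)
qed simp

lemma matrix_inv_eq_left_inverse:
  fixes A B :: "real^'n^'n"
  assumes "B ** A = mat 1"
  shows "matrix_inv A = B" and "A ** B = mat 1"
proof -
  show AB: "A ** B = mat 1" using assms matrix_left_right_inverse by blast
  have "\<exists>A'. A ** A' = mat 1 \<and> A' ** A = mat 1" using AB assms by blast
  then have inv: "A ** matrix_inv A = mat 1 \<and> matrix_inv A ** A = mat 1"
    unfolding matrix_inv_def by (rule someI_ex)
  have "matrix_inv A = matrix_inv A ** (A ** B)" using AB by simp
  also have "\<dots> = (matrix_inv A ** A) ** B" by (simp add: matrix_mul_assoc)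
  also have "\<dots> = B" using inv by simp
  finally show "matrix_inv A = B" .
qed

lemma matrix_inv_left_if_kernel_trivial:
  fixes A :: "real^'n^'n"
  assumes "\<And>x. A *v x = 0 \<Longrightarrow> x = 0"
  shows "matrix_inv A ** A = mat 1"
proof -
  obtain B where "B ** A = mat 1" using matrix_left_invertible_ker[of A] assms by blast
  then show ?thesis using matrix_inv_eq_left_inverse by metis
qed

lemma matrix_mult_uminus_diff_identity:
  fixes P N Q :: "real^'n^'n"
  shows "(P ** - N) ** (Q - mat 1) + (P - mat 1) ** (N ** Q) = P ** N - N ** Q"
proof -
  have mm: "bilinear (\<lambda>(x::real^'n^'n) (y::real^'n^'n). x ** y)" by (rule bilinear_matrix_matrix_mult)
  have "(P ** - N) ** (Q - mat 1) = - ((P ** N) ** Q) + P ** N"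
    using bilinear_rneg[OF mm, of P N] bilinear_rsub[OF mm, of "P ** - N" Q "mat 1"]
      bilinear_lneg[OF mm, of "P ** N" Q] by simp
  moreover have "(P - mat 1) ** (N ** Q) = (P ** N) ** Q - N ** Q"
    using bilinear_lsub[OF mm, of P "mat 1" "N ** Q"] by (simp add: matrix_mul_assoc)
  ultimately show ?thesis by simp
qed

lemma matrix_mult_diff_mat1:
  fixes P Q :: "real^'n^'n"
  shows "(P - mat 1) ** (Q - mat 1) = P ** Q - P - Q + mat 1"
  using bilinear_lsub[OF bilinear_matrix_matrix_mult, of P "mat 1" "Q - mat 1"]
    bilinear_rsub[OF bilinear_matrix_matrix_mult, of P Q "mat 1"]
    bilinear_rsub[OF bilinear_matrix_matrix_mult, of "mat 1" Q "mat 1"]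
  by simp

locale fundamental_matrix =
  fixes M :: "real \<Rightarrow> real^'n^'n" and \<Phi> :: "real \<Rightarrow> real^'n^'n"
  assumes coefficient_bounded_measurable: "locally_bounded_measurable M"
    and initial: "\<Phi> 0 = mat 1"
    and integral_equation: "\<And>t. 0 \<le> t \<Longrightarrow> ((\<lambda>s. M s ** \<Phi> s) has_integral (\<Phi> t - mat 1)) {0..t}"
begin

lemma coefficient_measurable: "M \<in> borel_measurable (lebesgue_on {0..T})"
  and coefficient_bounded: "bounded (M ` {0..T})"
  using coefficient_bounded_measurable by (auto simp: locally_bounded_measurable_def)

lemma continuous: "continuous_on {0..T} \<Phi>"
  by (rule continuous_on_if_has_integral_increment[where g="\<lambda>s. M s ** \<Phi> s"])
    (auto simp: initial integral_equation)

lemma integral_eq: "0 \<le> t \<Longrightarrow> integral {0..t} (\<lambda>s. M s ** \<Phi> s) = \<Phi> t - mat 1"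
  by (rule integral_unique[OF integral_equation])

lemma absolutely_integrable: "(\<lambda>s. M s ** \<Phi> s) absolutely_integrable_on {0..t}"
  by (rule absolutely_integrable_bilinear_measurable_continuous
      [OF bilinear_matrix_matrix_mult coefficient_measurable coefficient_bounded continuous order_refl])

text \<open>The left inverse solves the adjoint equation \<Psi>' = - \<Psi> M; by the product rule,
  \<Psi> \<Phi> is then constant.\<close>

lemma left_inverse_exists:
  obtains \<Psi> where "\<And>T. continuous_on {0..T} \<Psi>" and "\<And>t. 0 \<le> t \<Longrightarrow> \<Psi> t ** \<Phi> t = mat 1"
proof -
  have "locally_bounded_measurable (\<lambda>s. - M s)"
    using coefficient_measurable coefficient_bounded
    by (auto simp: locally_bounded_measurable_def bounded_iff intro: borel_measurable_uminus)
  then have neg: "(\<lambda>s. - M s) \<in> borel_measurable (lebesgue_on {0..T})" "bounded ((\<lambda>s. - M s) ` {0..T})" for T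
    by (auto simp: locally_bounded_measurable_def)
  obtain \<Psi> where \<Psi>_cont: "\<And>T. continuous_on {0..T} \<Psi>"
    and \<Psi>_eq: "\<And>t. 0 \<le> t \<Longrightarrow> \<Psi> t = mat 1 + integral {0..t} (\<lambda>s. \<Psi> s ** - M s)"
    using linear_volterra_exists[OF bilinear_swap[OF bilinear_matrix_matrix_mult]
        \<open>locally_bounded_measurable (\<lambda>s. - M s)\<close>, of "mat 1"] by blast
  have \<Psi>_abs: "(\<lambda>s. \<Psi> s ** - M s) absolutely_integrable_on {0..t}" for t
    using absolutely_integrable_bilinear_measurable_continuous
      [OF bilinear_swap[OF bilinear_matrix_matrix_mult] neg \<Psi>_cont order_refl] by simp
  have \<Psi>_int: "integral {0..t} (\<lambda>s. \<Psi> s ** - M s) = \<Psi> t - mat 1" if "0 \<le> t" for t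
    using \<Psi>_eq[OF that] by simp
  have mm: "bilinear (\<lambda>(x::real^'n^'n) (y::real^'n^'n). x ** y)" by (rule bilinear_matrix_matrix_mult)
  have "\<Psi> t ** \<Phi> t = mat 1" if t: "0 \<le> t" for t
  proof -
    have "((\<lambda>s. \<Psi> s ** M s - M s ** \<Phi> s) has_integral (\<Psi> t - mat 1) ** (\<Phi> t - mat 1)) {0..t}"
      using has_integral_bilinear_indefinite_integrals[OF mm \<Psi>_abs[of t] absolutely_integrable[of t]]
      by (rule has_integral_eq_rhs[OF has_integral_eq[rotated]])
        (use t in \<open>auto simp: integral_eq \<Psi>_int matrix_mult_uminus_diff_identity\<close>)
    moreover have "((\<lambda>s. \<Psi> s ** M s - M s ** \<Phi> s) has_integral - (\<Psi> t - mat 1) - (\<Phi> t - mat 1)) {0..t}"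
    proof (rule has_integral_diff[OF _ integral_equation[OF t]])
      have "((\<lambda>s. \<Psi> s ** - M s) has_integral (\<Psi> t - mat 1)) {0..t}"
        using \<Psi>_abs t by (auto simp: \<Psi>_int[symmetric] absolutely_integrable_on_def)
      from has_integral_neg[OF this]
      show "((\<lambda>s. \<Psi> s ** M s) has_integral - (\<Psi> t - mat 1)) {0..t}"
        by (simp add: bilinear_rneg[OF mm])
    qed
    ultimately have "(\<Psi> t - mat 1) ** (\<Phi> t - mat 1) = - (\<Psi> t - mat 1) - (\<Phi> t - mat 1)"
      by (rule has_integral_unique)
    then show ?thesis by (simp add: matrix_mult_diff_mat1 algebra_simps)
  qed
  with \<Psi>_cont that show ?thesis by blast
qed

lemma inverse: "0 \<le> t \<Longrightarrow> \<Phi> t ** matrix_inv (\<Phi> t) = mat 1"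
  and continuous_inverse: "continuous_on {0..T} (\<lambda>t. matrix_inv (\<Phi> t))"
proof -
  obtain \<Psi> where \<Psi>_cont: "\<And>T. continuous_on {0..T} \<Psi>" and \<Psi>: "\<And>t. 0 \<le> t \<Longrightarrow> \<Psi> t ** \<Phi> t = mat 1"
    using left_inverse_exists by blast
  show "0 \<le> t \<Longrightarrow> \<Phi> t ** matrix_inv (\<Phi> t) = mat 1"
    using matrix_inv_eq_left_inverse[OF \<Psi>] by simp
  show "continuous_on {0..T} (\<lambda>t. matrix_inv (\<Phi> t))"
    using \<Psi>_cont by (rule continuous_on_eq) (simp add: matrix_inv_eq_left_inverse[OF \<Psi>])
qed

definition particular_solution :: "(real \<Rightarrow> real^'n) \<Rightarrow> real \<Rightarrow> real^'n" where
  "particular_solution B t = integral {0..t} (\<lambda>s. (\<Phi> t ** matrix_inv (\<Phi> s)) *v B s)"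

context
  fixes B :: "real \<Rightarrow> real^'n"
  assumes forcing_bounded_measurable: "locally_bounded_measurable B"
begin

lemma absolutely_integrable_inverse_forcing:
  "(\<lambda>s. matrix_inv (\<Phi> s) *v B s) absolutely_integrable_on {0..t}"
  using forcing_bounded_measurable
    absolutely_integrable_bilinear_measurable_continuous
      [OF bilinear_swap[OF bilinear_matrix_vector_mult] _ _ continuous_inverse order_refl]
  by (simp add: locally_bounded_measurable_def)

lemma integrable_inverse_forcing: "(\<lambda>s. matrix_inv (\<Phi> s) *v B s) integrable_on {0..t}"
  using absolutely_integrable_inverse_forcing by (simp add: absolutely_integrable_on_def)

lemma particular_solution_eq:
  "particular_solution B t = \<Phi> t *v integral {0..t} (\<lambda>s. matrix_inv (\<Phi> s) *v B s)"
  using integral_linear[OF integrable_inverse_forcing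
      bounded_linear_bilinear_right[OF bilinear_matrix_vector_mult, of "\<Phi> t"]]
  by (simp add: particular_solution_def o_def matrix_vector_mul_assoc)

lemma continuous_particular_solution: "continuous_on {0..T} (particular_solution B)"
  unfolding particular_solution_eq[abs_def]
  by (rule bilinear_continuous_on_compose[OF continuous _ bilinear_matrix_vector_mult])
    (rule indefinite_integral_continuous_1[OF integrable_inverse_forcing])

lemma has_integral_particular_solution:
  assumes t: "0 \<le> t"
  shows "((\<lambda>s. M s *v particular_solution B s + B s) has_integral particular_solution B t) {0..t}"
proof -
  define G where "G t = integral {0..t} (\<lambda>s. matrix_inv (\<Phi> s) *v B s)" for t
  have "((\<lambda>s. (M s ** \<Phi> s) *v G s + (\<Phi> s - mat 1) *v (matrix_inv (\<Phi> s) *v B s))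
      has_integral ((\<Phi> t - mat 1) *v G t)) {0..t}"
    using has_integral_bilinear_indefinite_integrals
      [OF bilinear_matrix_vector_mult absolutely_integrable[of t] absolutely_integrable_inverse_forcing[of t]]
    by (rule has_integral_eq_rhs[OF has_integral_eq[rotated]]) (use t in \<open>auto simp: G_def integral_eq\<close>)
  moreover have "(M s ** \<Phi> s) *v G s + (\<Phi> s - mat 1) *v (matrix_inv (\<Phi> s) *v B s) =
      M s *v particular_solution B s + B s - matrix_inv (\<Phi> s) *v B s" if "s \<in> {0..t}" for s
  proof -
    have "\<Phi> s *v (matrix_inv (\<Phi> s) *v B s) = B s"
      using inverse[of s] that by (simp add: matrix_vector_mul_assoc)
    then show ?thesis
      by (simp add: G_def particular_solution_eq matrix_vector_mult_diff_rdistrib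
          matrix_vector_mul_assoc[symmetric])
  qed
  ultimately have "((\<lambda>s. M s *v particular_solution B s + B s - matrix_inv (\<Phi> s) *v B s)
      has_integral ((\<Phi> t - mat 1) *v G t)) {0..t}"
    by (rule has_integral_eq[rotated])
  from has_integral_add[OF this integrable_integral[OF integrable_inverse_forcing]]
  show ?thesis
    by (simp add: G_def particular_solution_eq matrix_vector_mult_diff_rdistrib)
qed

lemma variation_of_constants:
  assumes x: "continuous_on {0..r} x"
    and x_eq: "\<And>t. t \<in> {0..r} \<Longrightarrow> ((\<lambda>s. M s *v x s + B s) has_integral (x t - \<xi>)) {0..t}"
    and t: "t \<in> {0..r}"
  shows "x t = \<Phi> t *v \<xi> + particular_solution B t"
proof -
  define D where "D s = x s - \<Phi> s *v \<xi> - particular_solution B s" for s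
  have D_eq: "((\<lambda>s. M s *v D s) has_integral D t') {0..t'}" if t': "t' \<in> {0..r}" for t'
  proof -
    have "((\<lambda>s. M s *v (\<Phi> s *v \<xi>)) has_integral (\<Phi> t' *v \<xi> - \<xi>)) {0..t'}"
      using has_integral_linear[OF integral_equation bounded_linear_bilinear_left[OF bilinear_matrix_vector_mult, of \<xi>]] t'
      by (simp add: o_def matrix_vector_mul_assoc matrix_vector_mult_diff_rdistrib)
    from has_integral_diff[OF has_integral_diff[OF x_eq[OF t'] this] has_integral_particular_solution]
    show ?thesis using t' by (simp add: D_def matrix_vector_mult_diff_distrib algebra_simps)
  qed
  have "continuous_on {0..r} D"
    unfolding D_def
    by (intro continuous_intros x continuous_particular_solution
        bilinear_continuous_on_compose[OF continuous _ bilinear_matrix_vector_mult])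
  then have "D t = 0"
    by (rule linear_volterra_homogeneous_eq_0[OF bilinear_matrix_vector_mult coefficient_measurable
        coefficient_bounded _ _ t]) (simp add: integral_unique[OF D_eq])
  then show ?thesis by (simp add: D_def algebra_simps)
qed

end

end

lemma fundamental_matrix_exists:
  fixes M :: "real \<Rightarrow> real^'n^'n"
  assumes M: "locally_bounded_measurable M"
  shows "\<exists>\<Phi>. fundamental_matrix M \<Phi>"
proof -
  obtain P where P: "\<And>T. continuous_on {0..T} P"
    and eq: "\<And>t. 0 \<le> t \<Longrightarrow> P t = mat 1 + integral {0..t} (\<lambda>s. M s ** P s)"
    using linear_volterra_exists[OF bilinear_matrix_matrix_mult M, of "mat 1"] by blast
  have "(\<lambda>s. M s ** P s) integrable_on {0..t}" for t
    using M integrable_bilinear_measurable_continuous[OF bilinear_matrix_matrix_mult _ _ P order_refl]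
    unfolding locally_bounded_measurable_def by blast
  then have "((\<lambda>s. M s ** P s) has_integral (P t - mat 1)) {0..t}" if "0 \<le> t" for t
    using integrable_integral[OF \<open>\<And>t. _ integrable_on {0..t}\<close>] eq[OF that] by simp
  moreover have "P 0 = mat 1" using eq[of 0] by simp
  ultimately show ?thesis using M by (auto simp: fundamental_matrix_def)
qed

section \<open>Observability Gramian\<close>

definition gramian :: "(real \<Rightarrow> real^'n) \<Rightarrow> real \<Rightarrow> real^'n^'n" where
  "gramian q r = integral {0..r} (\<lambda>t. \<chi> i j. q t $ i * q t $ j)"

lemma outer_product_mult_vector: "(\<chi> i j. q $ i * q $ j) *v v = (q \<bullet> v) *\<^sub>R (q :: real^'n)"
  by (simp add: vec_eq_iff matrix_vector_mult_def inner_vec_def sum_distrib_left mult_ac)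

context
  fixes q :: "real \<Rightarrow> real^'n" and r :: real
  assumes q_continuous: "continuous_on {0..r} q"
begin

lemma integrable_outer_product: "(\<lambda>t. \<chi> i j. q t $ i * q t $ j) integrable_on {0..r}"
  by (intro integrable_continuous_real continuous_on_vec_lambda continuous_intros q_continuous)

lemma gramian_symmetric: "transpose (gramian q r) = gramian q r"
proof -
  have "transpose (gramian q r) = integral {0..r} (\<lambda>t. transpose (\<chi> i j. q t $ i * q t $ j))"
    using integral_linear[OF integrable_outer_product bounded_linear_transpose]
    by (simp add: gramian_def o_def)
  also have "\<dots> = gramian q r"
    by (simp add: gramian_def transpose_def vec_eq_iff mult.commute)
  finally show ?thesis .
qed

lemma gramian_mult_vector: "gramian q r *v v = integral {0..r} (\<lambda>t. (q t \<bullet> v) *\<^sub>R q t)"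
  using integral_linear[OF integrable_outer_product
      bounded_linear_bilinear_left[OF bilinear_matrix_vector_mult, of v]]
  by (simp add: gramian_def o_def outer_product_mult_vector)

lemma gramian_quadratic_form: "v \<bullet> (gramian q r *v v) = integral {0..r} (\<lambda>t. (q t \<bullet> v)\<^sup>2)"
proof -
  have int: "(\<lambda>t. (q t \<bullet> v) *\<^sub>R q t) integrable_on {0..r}"
    by (intro integrable_continuous_real continuous_intros q_continuous)
  have "v \<bullet> (gramian q r *v v) = integral {0..r} (\<lambda>t. v \<bullet> ((q t \<bullet> v) *\<^sub>R q t))"
    unfolding gramian_mult_vector integral_linear[OF int bounded_linear_inner_right, unfolded o_def] ..
  also have "\<dots> = integral {0..r} (\<lambda>t. (q t \<bullet> v)\<^sup>2)"
    by (simp add: power2_eq_square inner_commute)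
  finally show ?thesis .
qed

lemma gramian_reconstruction:
  assumes pos_def: "\<And>v. v \<noteq> 0 \<Longrightarrow> v \<bullet> (gramian q r *v v) > 0"
    and p: "\<And>t. t \<in> {0..r} \<Longrightarrow> p t = q t \<bullet> x"
  shows "x = matrix_inv (gramian q r) *v integral {0..r} (\<lambda>t. p t *\<^sub>R q t)"
proof -
  have "integral {0..r} (\<lambda>t. p t *\<^sub>R q t) = integral {0..r} (\<lambda>t. (q t \<bullet> x) *\<^sub>R q t)"
    by (rule integral_cong) (simp add: p)
  then have "integral {0..r} (\<lambda>t. p t *\<^sub>R q t) = gramian q r *v x"
    by (simp add: gramian_mult_vector)
  moreover have "matrix_inv (gramian q r) ** gramian q r = mat 1"
    using pos_def by (intro matrix_inv_left_if_kernel_trivial) (metis inner_zero_right less_irrefl)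
  ultimately show ?thesis by (simp add: matrix_vector_mul_assoc)
qed

end

lemma continuous_eq_0_if_integral_square_eq_0:
  fixes f :: "real \<Rightarrow> real"
  assumes f: "continuous_on {0..r} f" and r: "0 < r"
    and int: "integral {0..r} (\<lambda>t. (f t)\<^sup>2) \<le> 0" and t: "t \<in> {0..r}"
  shows "f t = 0"
proof -
  have fc: "continuous_on {0..r} (\<lambda>t. (f t)\<^sup>2)" by (intro continuous_intros f)
  have "0 \<le> integral {0..r} (\<lambda>t. (f t)\<^sup>2)"
    by (rule integral_nonneg[OF integrable_continuous_real[OF fc]]) simp
  then have "((\<lambda>t. (f t)\<^sup>2) has_integral 0) (cbox 0 r)"
    using integrable_integral[OF integrable_continuous_real[OF fc]] int by simp
  then have "(f t)\<^sup>2 = 0"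
    by (rule has_integral_0_cbox_imp_0[rotated 2]) (use fc t r in auto)
  then show ?thesis by simp
qed

lemma continuous_eq_0_if_indefinite_integral_eq_0:
  fixes g :: "real \<Rightarrow> real"
  assumes g: "continuous_on {0..r} g" and r: "0 < r"
    and int: "\<And>t. t \<in> {0..r} \<Longrightarrow> integral {0..t} g = 0" and t: "t \<in> {0..r}"
  shows "g t = 0"
proof -
  have "((\<lambda>u. integral {0..u} g) has_vector_derivative g t) (at t within cbox 0 r)"
    using integral_has_vector_derivative[OF g t] by simp
  moreover have "((\<lambda>u. integral {0..u} g) has_vector_derivative 0) (at t within cbox 0 r)"
    by (rule has_vector_derivative_transform[where f="\<lambda>u. 0"]) (use t int in auto)
  ultimately show ?thesis
    using vector_derivative_unique_within_closed_interval[OF r] t by simp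
qed

text \<open>The rows w (\<tau> i) span the whole space, so a nonzero v is not orthogonal to all of
  them, while q \<bullet> v = 0 on [0, r] would force w \<bullet> v = 0 there.\<close>

lemma gramian_pos_def:
  fixes w :: "real \<Rightarrow> real^'n" and \<tau> :: "'n \<Rightarrow> real"
  assumes w: "continuous_on {0..r} w" and r: "0 < r" and \<tau>: "\<And>i. \<tau> i \<in> {0..r}"
    and det: "det (\<chi> i. w (\<tau> i)) \<noteq> 0" and v: "v \<noteq> 0"
  shows "v \<bullet> (gramian (\<lambda>t. integral {0..t} w) r *v v) > 0"
proof (rule ccontr)
  have wv: "continuous_on {0..r} (\<lambda>s. w s \<bullet> v)" by (intro continuous_intros w)
  have qv: "integral {0..t} w \<bullet> v = integral {0..t} (\<lambda>s. w s \<bullet> v)" if "t \<in> {0..r}" for t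
    using integrable_continuous_real[OF continuous_on_subset[OF w]] that by simp
  have q: "continuous_on {0..r} (\<lambda>t. integral {0..t} w)"
    by (intro indefinite_integral_continuous_1 integrable_continuous_real w)
  assume "\<not> ?thesis"
  then have sq: "integral {0..r} (\<lambda>t. (integral {0..t} w \<bullet> v)\<^sup>2) \<le> 0"
    by (simp add: gramian_quadratic_form[OF q])
  have "integral {0..t} w \<bullet> v = 0" if "t \<in> {0..r}" for t
    by (rule continuous_eq_0_if_integral_square_eq_0[OF _ r sq that]) (intro continuous_intros q)
  then have "w t \<bullet> v = 0" if "t \<in> {0..r}" for t
    using continuous_eq_0_if_indefinite_integral_eq_0[OF wv r _ that] qv by simp
  then have "(\<chi> i. w (\<tau> i)) *v v = 0"
    using \<tau> by (simp add: vec_eq_iff matrix_vector_mult_def inner_vec_def mult.commute)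
  then show False
    using v det invertible_det_nz inj_matrix_vector_mult by (metis injD matrix_vector_mult_0_right)
qed

lemma Qmat_eq_gramian: "Qmat Ost A b c f1 u x0 y0 r = gramian (qfun Ost A b c f1 u x0 y0) r"
  by (simp add: Qmat_def gramian_def)

section \<open>The partially linear system\<close>

lemma locally_lipschitz_on_imp_continuous_on:
  assumes "locally_lipschitz_on S g"
  shows "continuous_on S g"
proof (clarsimp simp: continuous_on_eq_continuous_within)
  fix x assume x: "x \<in> S"
  obtain e L where e: "e > 0" and L: "L-lipschitz_on (cball x e \<inter> S) g"
    using assms x unfolding locally_lipschitz_on_def by blast
  have "continuous (at x within (cball x e \<inter> S)) g"
    using lipschitz_on_continuous_on[OF L] x e by (simp add: continuous_on_eq_continuous_within)
  moreover have "at x within (cball x e \<inter> S) = at x within S"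
    by (rule at_within_nhd[of _ "ball x e"]) (use e in auto)
  ultimately show "continuous (at x within S) g" by simp
qed

text \<open>On [0, T] the pair (Y s, u s) stays in a compact subset of W \<times> U, where G is bounded;
  measurability comes from a continuous extension of G to the whole space (Dugundji).\<close>

lemma locally_bounded_measurable_comp_input:
  fixes G :: "real \<Rightarrow> 'm::euclidean_space \<Rightarrow> 'c::euclidean_space" and Y :: "real \<Rightarrow> real"
  assumes G: "continuous_on (W \<times> U) (\<lambda>(y, v). G y v)" and U: "closed U"
    and u: "admissible_input U u"
    and Y: "\<And>T. continuous_on {0..T} Y" and YW: "\<And>t. 0 \<le> t \<Longrightarrow> Y t \<in> W"
  shows "locally_bounded_measurable (\<lambda>s. G (Y s) (u s))"
  unfolding locally_bounded_measurable_def
proof (intro allI conjI)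
  fix T
  have um: "u \<in> borel_measurable lebesgue" and uU: "\<forall>t\<ge>0. u t \<in> U" and ub: "bounded (u ` {0..T})"
    using u by (auto simp: admissible_input_def)
  define K where "K = Y ` {0..T} \<times> closure (u ` {0..T})"
  have K: "compact K"
    unfolding K_def using compact_continuous_image[OF Y compact_Icc] ub
    by (intro compact_Times) (auto simp: compact_closure)
  have "closure (u ` {0..T}) \<subseteq> U" using uU U by (intro closure_minimal) auto
  moreover have "Y ` {0..T} \<subseteq> W" using YW by auto
  ultimately have "K \<subseteq> W \<times> U" unfolding K_def by blast
  define Gp where "Gp = (\<lambda>(y, v). G y v)"
  have GK: "continuous_on K Gp" unfolding Gp_def by (rule continuous_on_subset[OF G \<open>K \<subseteq> W \<times> U\<close>])
  have img: "(\<lambda>s. (Y s, u s)) ` {0..T} \<subseteq> K" unfolding K_def by (auto intro: closure_subset[THEN subsetD])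
  have "(\<lambda>s. G (Y s) (u s)) ` {0..T} = Gp ` ((\<lambda>s. (Y s, u s)) ` {0..T})"
    by (simp add: Gp_def image_image)
  also have "\<dots> \<subseteq> Gp ` K" using img by (rule image_mono)
  finally show "bounded ((\<lambda>s. G (Y s) (u s)) ` {0..T})"
    by (rule bounded_subset[OF compact_imp_bounded[OF compact_continuous_image[OF GK K]]])
  have closed_K: "closedin (top_of_set UNIV) K"
    using closedin_closed_Int[OF compact_imp_closed[OF K], of UNIV] by simp
  obtain g where g: "continuous_on UNIV g" and "g ` UNIV \<subseteq> UNIV" and gK: "\<And>x. x \<in> K \<Longrightarrow> g x = Gp x"
    using Dugundji[OF convex_UNIV UNIV_not_empty closed_K GK subset_UNIV] by blast
  have "(\<lambda>s. (Y s, u s)) \<in> measurable (lebesgue_on {0..T}) (borel \<Otimes>\<^sub>M borel)"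
    by (intro measurable_Pair continuous_imp_measurable_on_sets_lebesgue[OF Y]
        measurable_restrict_space1[OF um]) simp
  then have "(\<lambda>s. g (Y s, u s)) \<in> borel_measurable (lebesgue_on {0..T})"
    using measurable_compose[OF _ borel_measurable_continuous_onI[OF g]] by (simp add: o_def borel_prod)
  then show "(\<lambda>s. G (Y s) (u s)) \<in> borel_measurable (lebesgue_on {0..T})"
  proof (rule measurable_cong[THEN iffD1, rotated])
    fix s assume "s \<in> space (lebesgue_on {0..T})"
    then have "(Y s, u s) \<in> K" using img by auto
    then show "g (Y s, u s) = G (Y s) (u s)" using gK by (simp add: Gp_def)
  qed
qed

lemma integrable_if_locally_bounded_measurable:
  fixes F :: "real \<Rightarrow> real"
  assumes "locally_bounded_measurable F"
  shows "F integrable_on {0..t}"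
proof -
  have "F \<in> borel_measurable (lebesgue_on {0..t})" "bounded (F ` {0..t})"
    using assms by (auto simp: locally_bounded_measurable_def)
  then have "(\<lambda>s. F s * 1) integrable_on {0..t}"
    by (rule integrable_bilinear_measurable_continuous[OF bilinear_times _ _ continuous_on_const order_refl])
  then show ?thesis by simp
qed

context
  fixes Ost A b c f1 u \<xi> \<eta> z
  assumes sol: "is_solution Ost A b c f1 u \<xi> \<eta> z"
begin

lemma solution_initial: "z 0 = (\<xi>, \<eta>)"
  and solution_in_domain: "0 \<le> t \<Longrightarrow> z t \<in> Ost"
  using sol by (auto simp: is_solution_def)

lemma solution_continuous: "continuous_on {0..T} z"
  using sol by (intro continuous_on_if_has_integral_increment[where g="sys_rhs A b c f1 u z"])
    (auto simp: is_solution_def)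

lemma solution_has_integral:
  assumes "0 \<le> t"
  shows "(sys_rhs A b c f1 u z has_integral (z t - (\<xi>, \<eta>))) {0..t}"
proof -
  have "(sys_rhs A b c f1 u z has_integral (z t - z 0)) {0..t}"
    using sol assms unfolding is_solution_def by blast
  then show ?thesis by (simp add: solution_initial)
qed

lemma solution_state_has_integral:
  "0 \<le> t \<Longrightarrow> ((\<lambda>s. A (snd (z s)) (u s) *v fst (z s) + b (snd (z s)) (u s)) has_integral (fst (z t) - \<xi>)) {0..t}"
  using has_integral_linear[OF solution_has_integral bounded_linear_fst] by (simp add: o_def sys_rhs_def)

lemma solution_output_has_integral:
  "0 \<le> t \<Longrightarrow> ((\<lambda>s. f1 (snd (z s)) (u s) + c (snd (z s)) \<bullet> fst (z s)) has_integral (snd (z t) - \<eta>)) {0..t}"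
  using has_integral_linear[OF solution_has_integral bounded_linear_snd] by (simp add: o_def sys_rhs_def)

end

lemma eq_if_SUP_abs_diff_le_0:
  fixes f g :: "real \<Rightarrow> real"
  assumes f: "continuous_on {0..r} f" and g: "continuous_on {0..r} g"
    and sup: "(SUP t\<in>{0..r}. \<bar>f t - g t\<bar>) \<le> 0" and t: "t \<in> {0..r}"
  shows "f t = g t"
proof -
  have "bdd_above ((\<lambda>t. \<bar>f t - g t\<bar>) ` {0..r})"
    by (intro bounded_imp_bdd_above compact_imp_bounded compact_continuous_image continuous_intros
        f g compact_Icc)
  then have "\<bar>f t - g t\<bar> \<le> (SUP t\<in>{0..r}. \<bar>f t - g t\<bar>)" by (rule cSUP_upper[OF t])
  with sup show ?thesis by simp
qed

locale observed_system =
  fixes Ost :: "((real^'n) \<times> real) set" and U :: "(real^'m) set"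
    and A :: "real \<Rightarrow> real^'m \<Rightarrow> real^'n^'n" and b :: "real \<Rightarrow> real^'m \<Rightarrow> real^'n"
    and c :: "real \<Rightarrow> real^'n" and f1 :: "real \<Rightarrow> real^'m \<Rightarrow> real"
    and u :: "real \<Rightarrow> real^'m" and x0 :: "real^'n" and y0 :: real
  assumes closed_inputs: "closed U"
    and continuous_A: "continuous_on (snd ` Ost \<times> U) (\<lambda>(y, v). A y v)"
    and continuous_b: "continuous_on (snd ` Ost \<times> U) (\<lambda>(y, v). b y v)"
    and continuous_c: "continuous_on (snd ` Ost) c"
    and continuous_f1: "continuous_on (snd ` Ost \<times> U) (\<lambda>(y, v). f1 y v)"
    and solutions_exist: "\<And>\<xi> \<eta>. (\<xi>, \<eta>) \<in> Ost \<Longrightarrow> \<exists>z. is_solution Ost A b c f1 u \<xi> \<eta> z"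
    and initial_state: "(x0, y0) \<in> Ost"
    and admissible: "admissible_input U u"
begin

abbreviation Y where "Y \<equiv> ytraj Ost A b c f1 u x0 y0"
abbreviation \<Phi> where "\<Phi> \<equiv> fundmat Ost A b c f1 u x0 y0"

lemma traj_is_solution:
  assumes "(\<xi>, \<eta>) \<in> Ost"
  shows "is_solution Ost A b c f1 u \<xi> \<eta> (traj Ost A b c f1 u \<xi> \<eta>)"
  unfolding traj_def using solutions_exist[OF assms] by (rule someI_ex)

lemma continuous_output: "continuous_on {0..T} (ytraj Ost A b c f1 u \<xi> \<eta>)" if "(\<xi>, \<eta>) \<in> Ost"
  unfolding ytraj_def[abs_def]
  by (intro continuous_intros solution_continuous[OF traj_is_solution[OF that]])

lemma output_in_domain: "0 \<le> t \<Longrightarrow> Y t \<in> snd ` Ost"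
  using solution_in_domain[OF traj_is_solution[OF initial_state]] by (force simp: ytraj_def)

lemma locally_bounded_measurable_along_output:
  assumes "continuous_on (snd ` Ost \<times> U) (\<lambda>(y, v). G y v)"
  shows "locally_bounded_measurable (\<lambda>s. G (Y s) (u s))"
  by (rule locally_bounded_measurable_comp_input[OF assms closed_inputs admissible
        continuous_output[OF initial_state] output_in_domain])

lemma continuous_c_along_output: "continuous_on {0..T} (\<lambda>s. c (Y s))"
  by (rule continuous_on_compose2[OF continuous_c continuous_output[OF initial_state]])
    (use output_in_domain in auto)

sublocale fundamental_matrix "\<lambda>s. A (Y s) (u s)" \<Phi>
proof -
  have M: "locally_bounded_measurable (\<lambda>s. A (Y s) (u s))"
    using locally_bounded_measurable_along_output[OF continuous_A] .
  obtain \<Phi>' where "fundamental_matrix (\<lambda>s. A (Y s) (u s)) \<Phi>'"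
    using fundamental_matrix_exists[OF M] by blast
  then have "\<exists>\<Phi>. \<Phi> 0 = mat 1 \<and> (\<forall>t\<ge>0. ((\<lambda>s. A (Y s) (u s) ** \<Phi> s) has_integral (\<Phi> t - mat 1)) {0..t})"
    by (auto simp: fundamental_matrix_def)
  then have "\<Phi> 0 = mat 1 \<and> (\<forall>t\<ge>0. ((\<lambda>s. A (Y s) (u s) ** \<Phi> s) has_integral (\<Phi> t - mat 1)) {0..t})"
    unfolding fundmat_def by (rule someI_ex)
  with M show "fundamental_matrix (\<lambda>s. A (Y s) (u s)) \<Phi>"
    by (simp add: fundamental_matrix_def)
qed

lemma theta_eq: "theta Ost A b c f1 u x0 y0 = particular_solution (\<lambda>s. b (Y s) (u s))"
  by (simp add: fun_eq_iff theta_def particular_solution_def)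

lemma qfun_eq: "qfun Ost A b c f1 u x0 y0 = (\<lambda>t. integral {0..t} (\<lambda>s. c (Y s) v* \<Phi> s))"
  by (simp add: fun_eq_iff qfun_def)

lemma continuous_observation_row: "continuous_on {0..T} (\<lambda>s. c (Y s) v* \<Phi> s)"
  by (rule bilinear_continuous_on_compose[OF continuous_c_along_output continuous bilinear_vector_matrix_mult])

lemma continuous_qfun: "continuous_on {0..T} (qfun Ost A b c f1 u x0 y0)"
  unfolding qfun_eq
  by (intro indefinite_integral_continuous_1 integrable_continuous_real continuous_observation_row)

text \<open>A state whose output agrees with that of (x0, y0) up to time t moves its linear part
  along the same linear time-varying system, so the output minus its known terms is q(t) \<bullet> \<xi>.\<close>

lemma output_representation:
  assumes sol: "is_solution Ost A b c f1 u \<xi> \<eta> z" and t: "0 \<le> t"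
    and same: "\<And>s. s \<in> {0..t} \<Longrightarrow> snd (z s) = Y s"
  shows "snd (z t) - \<eta> - integral {0..t} (\<lambda>s. f1 (Y s) (u s))
           - integral {0..t} (\<lambda>s. c (Y s) \<bullet> theta Ost A b c f1 u x0 y0 s)
         = qfun Ost A b c f1 u x0 y0 t \<bullet> \<xi>"
proof -
  let ?B = "\<lambda>s. b (Y s) (u s)" and ?\<theta> = "particular_solution (\<lambda>s. b (Y s) (u s))"
  have B: "locally_bounded_measurable ?B" by (rule locally_bounded_measurable_along_output[OF continuous_b])
  have F: "(\<lambda>s. f1 (Y s) (u s)) integrable_on {0..t}"
    by (rule integrable_if_locally_bounded_measurable[OF locally_bounded_measurable_along_output[OF continuous_f1]])
  have x: "fst (z s) = \<Phi> s *v \<xi> + ?\<theta> s" if s: "s \<in> {0..t}" for s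
  proof (rule variation_of_constants[OF B _ _ s])
    show "continuous_on {0..t} (\<lambda>s. fst (z s))" by (intro continuous_intros solution_continuous[OF sol])
    fix t' assume t': "t' \<in> {0..t}"
    show "((\<lambda>s. A (Y s) (u s) *v fst (z s) + ?B s) has_integral (fst (z t') - \<xi>)) {0..t'}"
      by (rule has_integral_eq[OF _ solution_state_has_integral[OF sol]]) (use same t' in auto)
  qed
  have "((\<lambda>s. f1 (Y s) (u s) + (c (Y s) v* \<Phi> s) \<bullet> \<xi> + c (Y s) \<bullet> ?\<theta> s) has_integral (snd (z t) - \<eta>)) {0..t}"
    by (rule has_integral_eq[OF _ solution_output_has_integral[OF sol t]])
      (use same x t in \<open>auto simp: dot_lmul_matrix inner_add_right\<close>)
  then have "snd (z t) - \<eta> = integral {0..t} (\<lambda>s. f1 (Y s) (u s) + (c (Y s) v* \<Phi> s) \<bullet> \<xi> + c (Y s) \<bullet> ?\<theta> s)"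
    by (simp add: integral_unique)
  also have "\<dots> = integral {0..t} (\<lambda>s. f1 (Y s) (u s)) + integral {0..t} (\<lambda>s. (c (Y s) v* \<Phi> s) \<bullet> \<xi>)
      + integral {0..t} (\<lambda>s. c (Y s) \<bullet> ?\<theta> s)"
  proof -
    have "(\<lambda>s. c (Y s) v* \<Phi> s) integrable_on {0..t}"
      by (intro integrable_continuous_real continuous_observation_row)
    then have row: "(\<lambda>s. (c (Y s) v* \<Phi> s) \<bullet> \<xi>) integrable_on {0..t}"
      using integrable_linear[OF _ bounded_linear_inner_left] by (simp add: o_def)
    have "(\<lambda>s. c (Y s) \<bullet> ?\<theta> s) integrable_on {0..t}"
      by (intro integrable_continuous_real continuous_intros
          continuous_c_along_output continuous_particular_solution[OF B])
    then show ?thesis by (simp only: integral_add[OF integrable_add[OF F row]] integral_add[OF F row])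
  qed
  also have "integral {0..t} (\<lambda>s. (c (Y s) v* \<Phi> s) \<bullet> \<xi>) = qfun Ost A b c f1 u x0 y0 t \<bullet> \<xi>"
    unfolding qfun_eq
    by (rule integral_linear[OF _ bounded_linear_inner_left, unfolded o_def])
      (intro integrable_continuous_real continuous_observation_row)
  finally show ?thesis by (simp add: theta_eq)
qed

lemma pfun_eq: "0 \<le> t \<Longrightarrow> pfun Ost A b c f1 u x0 y0 t = qfun Ost A b c f1 u x0 y0 t \<bullet> x0"
  using output_representation[OF traj_is_solution[OF initial_state]]
  by (simp add: pfun_def ytraj_def)

lemma strongly_distinguishes_if_gramian_pos_def:
  assumes r: "0 \<le> r" and pos_def: "\<And>v. v \<noteq> 0 \<Longrightarrow> v \<bullet> (Qmat Ost A b c f1 u x0 y0 r *v v) > 0"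
  shows "strongly_distinguishes Ost A b c f1 u r x0 y0"
  unfolding strongly_distinguishes_def
proof (intro allI impI)
  fix \<xi> \<eta> assume H: "(\<xi>, \<eta>) \<in> Ost \<and> (\<xi>, \<eta>) \<noteq> (x0, y0)"
  let ?z = "traj Ost A b c f1 u \<xi> \<eta>" and ?q = "qfun Ost A b c f1 u x0 y0"
  have \<xi>\<eta>: "(\<xi>, \<eta>) \<in> Ost" using H by blast
  have sol: "is_solution Ost A b c f1 u \<xi> \<eta> ?z" by (rule traj_is_solution[OF \<xi>\<eta>])
  show "(SUP t\<in>{0..r}. \<bar>Y t - ytraj Ost A b c f1 u \<xi> \<eta> t\<bar>) > 0"
  proof (rule ccontr)
    assume "\<not> ?thesis"
    then have sup: "(SUP t\<in>{0..r}. \<bar>Y t - ytraj Ost A b c f1 u \<xi> \<eta> t\<bar>) \<le> 0" by simp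
    have same: "snd (?z t) = Y t" if "t \<in> {0..r}" for t
      using eq_if_SUP_abs_diff_le_0[OF continuous_output[OF initial_state] continuous_output[OF \<xi>\<eta>] sup that]
      by (simp add: ytraj_def)
    have \<eta>: "\<eta> = y0"
      using same[of 0] r solution_initial[OF sol] solution_initial[OF traj_is_solution[OF initial_state]]
      by (simp add: ytraj_def)
    have "?q t \<bullet> (\<xi> - x0) = 0" if t: "t \<in> {0..r}" for t
    proof -
      have "\<And>s. s \<in> {0..t} \<Longrightarrow> snd (?z s) = Y s" using same t by auto
      from output_representation[OF sol, of t, OF _ this] t same[OF t] \<eta>
      have "?q t \<bullet> \<xi> = pfun Ost A b c f1 u x0 y0 t"
        by (simp add: pfun_def)
      then show ?thesis using pfun_eq t by (simp add: inner_diff_right)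
    qed
    then have "integral {0..r} (\<lambda>t. (?q t \<bullet> (\<xi> - x0))\<^sup>2) = integral {0..r} (\<lambda>t. 0)"
      by (intro integral_cong) simp
    then have "(\<xi> - x0) \<bullet> (Qmat Ost A b c f1 u x0 y0 r *v (\<xi> - x0)) = 0"
      by (simp add: Qmat_eq_gramian gramian_quadratic_form[OF continuous_qfun])
    then have "\<xi> = x0" using pos_def[of "\<xi> - x0"] by force
    with H \<eta> show False by simp
  qed
qed

end

theorem corollary2p5:
  fixes Ost :: "((real^'n) \<times> real) set" and U :: "(real^'m) set"
    and A :: "real \<Rightarrow> real^'m \<Rightarrow> real^'n^'n" and b :: "real \<Rightarrow> real^'m \<Rightarrow> real^'n"
    and c :: "real \<Rightarrow> real^'n" and f1 :: "real \<Rightarrow> real^'m \<Rightarrow> real"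
    and u :: "real \<Rightarrow> real^'m" and r :: real and x0 :: "real^'n" and y0 :: real
    and \<tau> :: "'n \<Rightarrow> real"
  assumes "open Ost" and "U \<noteq> {}" and "closed U"
    and "locally_lipschitz_on (snd ` Ost \<times> U) (\<lambda>(y, v). A y v)"
    and "locally_lipschitz_on (snd ` Ost \<times> U) (\<lambda>(y, v). b y v)"
    and "\<forall>j. locally_lipschitz_on (snd ` Ost) (\<lambda>y. c y $ j)"
    and "locally_lipschitz_on (snd ` Ost \<times> U) (\<lambda>(y, v). f1 y v)"
    and "\<forall>\<xi> \<eta> v. (\<xi>, \<eta>) \<in> Ost \<longrightarrow> admissible_input U v \<longrightarrow>
           (\<exists>z. is_solution Ost A b c f1 v \<xi> \<eta> z \<and>
              (\<forall>z'. is_solution Ost A b c f1 v \<xi> \<eta> z' \<longrightarrow> (\<forall>t\<ge>0. z' t = z t)))"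
    and "r > 0" and "(x0, y0) \<in> Ost" and "admissible_input U u"
    and "\<forall>i. \<tau> i \<in> {0..r}"
    and "det (\<chi> i. c (ytraj Ost A b c f1 u x0 y0 (\<tau> i)) v* fundmat Ost A b c f1 u x0 y0 (\<tau> i)) \<noteq> 0"
  shows "strongly_distinguishes Ost A b c f1 u r x0 y0 \<and>
         transpose (Qmat Ost A b c f1 u x0 y0 r) = Qmat Ost A b c f1 u x0 y0 r \<and>
         (\<forall>v. v \<noteq> 0 \<longrightarrow> v \<bullet> (Qmat Ost A b c f1 u x0 y0 r *v v) > 0) \<and>
         x0 = matrix_inv (Qmat Ost A b c f1 u x0 y0 r) *v
                integral {0..r} (\<lambda>t. pfun Ost A b c f1 u x0 y0 t *\<^sub>R qfun Ost A b c f1 u x0 y0 t)"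
proof -
  have "continuous_on (snd ` Ost) (\<lambda>y. \<chi> j. c y $ j)"
    using assms(6) by (intro continuous_on_vec_lambda) (auto intro: locally_lipschitz_on_imp_continuous_on)
  moreover have "\<exists>z. is_solution Ost A b c f1 u \<xi> \<eta> z" if "(\<xi>, \<eta>) \<in> Ost" for \<xi> \<eta>
    using assms(8,11) that by blast
  ultimately interpret observed_system Ost U A b c f1 u x0 y0
    using assms(3,10,11) by unfold_locales
      (auto intro: locally_lipschitz_on_imp_continuous_on assms(4,5,7))
  have pos_def: "v \<bullet> (Qmat Ost A b c f1 u x0 y0 r *v v) > 0" if "v \<noteq> 0" for v
    using gramian_pos_def[OF continuous_observation_row assms(9) _ assms(13) that] assms(12)
    by (simp add: Qmat_eq_gramian qfun_eq)
  have "x0 = matrix_inv (Qmat Ost A b c f1 u x0 y0 r) *v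
      integral {0..r} (\<lambda>t. pfun Ost A b c f1 u x0 y0 t *\<^sub>R qfun Ost A b c f1 u x0 y0 t)"
    unfolding Qmat_eq_gramian
    by (rule gramian_reconstruction[OF continuous_qfun]) (use pos_def pfun_eq in \<open>auto simp: Qmat_eq_gramian\<close>)
  with pos_def show ?thesis
    using strongly_distinguishes_if_gramian_pos_def[OF _ pos_def] gramian_symmetric[OF continuous_qfun] assms(9)
    by (simp add: Qmat_eq_gramian)
qed

end
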